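(* Let $H$, $\mathcal{R}$, $A$, $\mathcal{Q}$ be as in the context ($H$ factorisable). The formulas \[(h\otimes1)\triangleright a=\langle Sh,a_{(1)}\rangle a_{(2)}-1\langle Sh,a\rangle,\qquad (1\otimes g)\triangleright a=a_{(1)}\langle g,a_{(2)}\rangle-1\langle g,a\rangle,\qquad h,g\in H,\ a\in\ker\epsilon\subset A,\] define an action of the algebra $H\otimes H$ on $\ker\epsilon\subset A$, and its pull-back along the algebra isomorphism $\theta:H\bowtie A^{\rm op}\to H\otimes H$, \[\theta(h\otimes a)=h_{(1)}\mathcal{R}^{-(2)}\otimes h_{(2)}\mathcal{R}^{(1)}\,\langle\mathcal{R}^{-(1)}\mathcal{R}^{(2)},a\rangle,\] is the action of $H\bowtie A^{\rm op}$ on $\ker\epsilon\subset A$ given by $h\triangleright a=a_{(2)}\langle h,(Sa_{(1)})a_{(3)}\rangle$ and $b\triangleright a=\langle b,\mathcal{R}'^{(1)}\mathcal{R}^{(2)}\rangle\langle a_{(1)},\mathcal{R}'^{(2)}\rangle\langle a_{(3)},\mathcal{R}^{(1)}\rangle a_{(2)}-\langle b,\mathcal{Q}(a)\rangle1$.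
   Context: $H$ is a quasitriangular Hopf algebra over $\mathbb{C}$ with $\mathcal{R}=\mathcal{R}^{(1)}\otimes\mathcal{R}^{(2)}\in H\otimes H$ ($(\Delta\otimes{\rm id})\mathcal{R}=\mathcal{R}_{13}\mathcal{R}_{23}$, $({\rm id}\otimes\Delta)\mathcal{R}=\mathcal{R}_{13}\mathcal{R}_{12}$, $\Delta^{\rm op}=\mathcal{R}\Delta\mathcal{R}^{-1}$), $\mathcal{R}^{-1}=\mathcal{R}^{-(1)}\otimes\mathcal{R}^{-(2)}$, $\mathcal{R}'$ a second copy of $\mathcal{R}$. $A$ is a Hopf algebra non-degenerately paired with $H$ (Hopf pairing $\langle hg,a\rangle=\langle h,a_{(1)}\rangle\langle g,a_{(2)}\rangle$, $\langle h,ab\rangle=\langle h_{(1)},a\rangle\langle h_{(2)},b\rangle$). $\mathcal{Q}(a)=(a\otimes{\rm id})(\mathcal{R}_{21}\mathcal{R})$, and factorisable means $\mathcal{Q}:A\to H$ is bijective; in this case $\theta$ is an isomorphism of algebras onto $H\otimes H$ (tensor product algebra). The quantum double $H\bowtie A^{\rm op}$ is $H\otimes A$ with product $(h\otimes a)(g\otimes b)=hg_{(2)}\otimes ba_{(2)}\langle g_{(1)},a_{(1)}\rangle\langle g_{(3)},Sa_{(3)}\rangle$. *)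

theory Defs
  imports Complex_Main
begin

definition cvs :: "(complex \<Rightarrow> 'v::ab_group_add \<Rightarrow> 'v) \<Rightarrow> bool" where
  "cvs sc \<longleftrightarrow>
     (\<forall>z x y. sc z (x + y) = sc z x + sc z y) \<and>
     (\<forall>z w x. sc (z + w) x = sc z x + sc w x) \<and>
     (\<forall>z w x. sc (z * w) x = sc z (sc w x)) \<and>
     (\<forall>x. sc 1 x = x)"

definition calg :: "(complex \<Rightarrow> 'v::ring_1 \<Rightarrow> 'v) \<Rightarrow> bool" where
  "calg sc \<longleftrightarrow> cvs sc \<and> (\<forall>z x y. sc z (x * y) = sc z x * y \<and> sc z (x * y) = x * sc z y)"

definition clin :: "(complex \<Rightarrow> 'v::ab_group_add \<Rightarrow> 'v) \<Rightarrow> (complex \<Rightarrow> 'w::ab_group_add \<Rightarrow> 'w)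
    \<Rightarrow> ('v \<Rightarrow> 'w) \<Rightarrow> bool" where
  "clin sc1 sc2 f \<longleftrightarrow> (\<forall>x y. f (x + y) = f x + f y) \<and> (\<forall>z x. f (sc1 z x) = sc2 z (f x))"

definition bilin :: "(complex \<Rightarrow> 'v::ab_group_add \<Rightarrow> 'v) \<Rightarrow> (complex \<Rightarrow> 'w::ab_group_add \<Rightarrow> 'w)
    \<Rightarrow> ('v \<Rightarrow> 'w \<Rightarrow> complex) \<Rightarrow> bool" where
  "bilin sc1 sc2 f \<longleftrightarrow> (\<forall>y. clin sc1 (*) (\<lambda>x. f x y)) \<and> (\<forall>x. clin sc2 (*) (\<lambda>y. f x y))"

definition trilin :: "(complex \<Rightarrow> 'v::ab_group_add \<Rightarrow> 'v) \<Rightarrow> ('v \<Rightarrow> 'v \<Rightarrow> 'v \<Rightarrow> complex) \<Rightarrow> bool" where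
  "trilin sc f \<longleftrightarrow> (\<forall>y w. clin sc (*) (\<lambda>x. f x y w)) \<and> (\<forall>x w. clin sc (*) (\<lambda>y. f x y w))
      \<and> (\<forall>x y. clin sc (*) (\<lambda>w. f x y w))"

text \<open>A list of pairs represents the sum of the corresponding pure tensors.  Two such
  representatives denote the same element of the algebraic tensor product iff all
  complex bilinear (resp. trilinear) forms agree on them.\<close>

definition teq2 :: "(complex \<Rightarrow> 'v::ab_group_add \<Rightarrow> 'v) \<Rightarrow> ('v \<times> 'v) list \<Rightarrow> ('v \<times> 'v) list \<Rightarrow> bool" where
  "teq2 sc xs ys \<longleftrightarrow> (\<forall>f. bilin sc sc f \<longrightarrow>
     sum_list (map (\<lambda>(x, y). f x y) xs) = sum_list (map (\<lambda>(x, y). f x y) ys))"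

definition teq3 :: "(complex \<Rightarrow> 'v::ab_group_add \<Rightarrow> 'v) \<Rightarrow> ('v \<times> 'v \<times> 'v) list \<Rightarrow> ('v \<times> 'v \<times> 'v) list \<Rightarrow> bool" where
  "teq3 sc xs ys \<longleftrightarrow> (\<forall>f. trilin sc f \<longrightarrow>
     sum_list (map (\<lambda>(x, y, w). f x y w) xs) = sum_list (map (\<lambda>(x, y, w). f x y w) ys))"

definition tmul2 :: "('v::times \<times> 'v) list \<Rightarrow> ('v \<times> 'v) list \<Rightarrow> ('v \<times> 'v) list" where
  "tmul2 xs ys = [(x * x', y * y'). (x, y) \<leftarrow> xs, (x', y') \<leftarrow> ys]"

text \<open>Iterated coproduct in Sweedler form: a(1) \<otimes> a(2) \<otimes> a(3).\<close>
definition delta3 :: "('v \<Rightarrow> ('v \<times> 'v) list) \<Rightarrow> 'v \<Rightarrow> ('v \<times> 'v \<times> 'v) list" where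
  "delta3 \<Delta> a = [(x, y, w). (x, u) \<leftarrow> \<Delta> a, (y, w) \<leftarrow> \<Delta> u]"

definition hopf :: "(complex \<Rightarrow> 'v::ring_1 \<Rightarrow> 'v) \<Rightarrow> ('v \<Rightarrow> ('v \<times> 'v) list) \<Rightarrow> ('v \<Rightarrow> complex)
    \<Rightarrow> ('v \<Rightarrow> 'v) \<Rightarrow> bool" where
  "hopf sc \<Delta> \<epsilon> S \<longleftrightarrow> calg sc \<and>
     \<comment> \<open>coproduct: linear algebra map, coassociative\<close>
     (\<forall>x y. teq2 sc (\<Delta> (x + y)) (\<Delta> x @ \<Delta> y)) \<and>
     (\<forall>z x. teq2 sc (\<Delta> (sc z x)) (map (\<lambda>(u, v). (sc z u, v)) (\<Delta> x))) \<and>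
     (\<forall>x y. teq2 sc (\<Delta> (x * y)) (tmul2 (\<Delta> x) (\<Delta> y))) \<and>
     teq2 sc (\<Delta> 1) [(1, 1)] \<and>
     (\<forall>x. teq3 sc [(u, v, w). (y, w) \<leftarrow> \<Delta> x, (u, v) \<leftarrow> \<Delta> y] (delta3 \<Delta> x)) \<and>
     \<comment> \<open>counit: linear algebra map, counit axioms\<close>
     clin sc (*) \<epsilon> \<and> (\<forall>x y. \<epsilon> (x * y) = \<epsilon> x * \<epsilon> y) \<and> \<epsilon> 1 = 1 \<and>
     (\<forall>x. sum_list (map (\<lambda>(u, v). sc (\<epsilon> u) v) (\<Delta> x)) = x) \<and>
     (\<forall>x. sum_list (map (\<lambda>(u, v). sc (\<epsilon> v) u) (\<Delta> x)) = x) \<and>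
     \<comment> \<open>antipode\<close>
     clin sc sc S \<and>
     (\<forall>x. sum_list (map (\<lambda>(u, v). S u * v) (\<Delta> x)) = sc (\<epsilon> x) 1) \<and>
     (\<forall>x. sum_list (map (\<lambda>(u, v). u * S v) (\<Delta> x)) = sc (\<epsilon> x) 1)"

definition hopf_pairing ::
  "(complex \<Rightarrow> 'h::ring_1 \<Rightarrow> 'h) \<Rightarrow> ('h \<Rightarrow> ('h \<times> 'h) list) \<Rightarrow> ('h \<Rightarrow> complex) \<Rightarrow> ('h \<Rightarrow> 'h) \<Rightarrow>
   (complex \<Rightarrow> 'a::ring_1 \<Rightarrow> 'a) \<Rightarrow> ('a \<Rightarrow> ('a \<times> 'a) list) \<Rightarrow> ('a \<Rightarrow> complex) \<Rightarrow> ('a \<Rightarrow> 'a) \<Rightarrow>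
   ('h \<Rightarrow> 'a \<Rightarrow> complex) \<Rightarrow> bool" where
  "hopf_pairing scH \<Delta>H \<epsilon>H SH scA \<Delta>A \<epsilon>A SA pr \<longleftrightarrow>
     bilin scH scA pr \<and>
     (\<forall>h g a. pr (h * g) a = sum_list (map (\<lambda>(a1, a2). pr h a1 * pr g a2) (\<Delta>A a))) \<and>
     (\<forall>h a b. pr h (a * b) = sum_list (map (\<lambda>(h1, h2). pr h1 a * pr h2 b) (\<Delta>H h))) \<and>
     (\<forall>a. pr 1 a = \<epsilon>A a) \<and> (\<forall>h. pr h 1 = \<epsilon>H h) \<and>
     (\<forall>h a. pr (SH h) a = pr h (SA a))"

definition nondegenerate :: "('h::zero \<Rightarrow> 'a::zero \<Rightarrow> complex) \<Rightarrow> bool" where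
  "nondegenerate pr \<longleftrightarrow> (\<forall>h. (\<forall>a. pr h a = 0) \<longrightarrow> h = 0) \<and> (\<forall>a. (\<forall>h. pr h a = 0) \<longrightarrow> a = 0)"

text \<open>R = sum of R(1) \<otimes> R(2) (list R), with inverse R^-1 (list Rinv).\<close>
definition quasitriangular :: "(complex \<Rightarrow> 'h::ring_1 \<Rightarrow> 'h) \<Rightarrow> ('h \<Rightarrow> ('h \<times> 'h) list)
    \<Rightarrow> ('h \<times> 'h) list \<Rightarrow> ('h \<times> 'h) list \<Rightarrow> bool" where
  "quasitriangular sc \<Delta> R Rinv \<longleftrightarrow>
     teq2 sc (tmul2 R Rinv) [(1, 1)] \<and> teq2 sc (tmul2 Rinv R) [(1, 1)] \<and>
     teq3 sc [(u, v, q). (r, q) \<leftarrow> R, (u, v) \<leftarrow> \<Delta> r] [(r, r', q * q'). (r, q) \<leftarrow> R, (r', q') \<leftarrow> R] \<and>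
     teq3 sc [(r, u, v). (r, q) \<leftarrow> R, (u, v) \<leftarrow> \<Delta> q] [(r * r', q', q). (r, q) \<leftarrow> R, (r', q') \<leftarrow> R] \<and>
     (\<forall>x. teq2 sc (map (\<lambda>(u, v). (v, u)) (\<Delta> x)) (tmul2 (tmul2 R (\<Delta> x)) Rinv))"

text \<open>Q(a) = (a \<otimes> id)(R21 R), where R21 R = sum R(2) R'(1) \<otimes> R(1) R'(2).\<close>
definition Qmap :: "(complex \<Rightarrow> 'h::ring_1 \<Rightarrow> 'h) \<Rightarrow> ('h \<times> 'h) list \<Rightarrow> ('h \<Rightarrow> 'a \<Rightarrow> complex) \<Rightarrow> 'a \<Rightarrow> 'h" where
  "Qmap scH R pr a = sum_list [scH (pr (q * r') a) (r * q'). (r, q) \<leftarrow> R, (r', q') \<leftarrow> R]"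

definition actL :: "(complex \<Rightarrow> 'a::ring_1 \<Rightarrow> 'a) \<Rightarrow> ('a \<Rightarrow> ('a \<times> 'a) list) \<Rightarrow> ('h \<Rightarrow> 'h)
    \<Rightarrow> ('h \<Rightarrow> 'a \<Rightarrow> complex) \<Rightarrow> 'h \<Rightarrow> 'a \<Rightarrow> 'a" where
  "actL scA \<Delta>A SH pr h a =
     sum_list (map (\<lambda>(a1, a2). scA (pr (SH h) a1) a2) (\<Delta>A a)) - scA (pr (SH h) a) 1"

definition actR :: "(complex \<Rightarrow> 'a::ring_1 \<Rightarrow> 'a) \<Rightarrow> ('a \<Rightarrow> ('a \<times> 'a) list)
    \<Rightarrow> ('h \<Rightarrow> 'a \<Rightarrow> complex) \<Rightarrow> 'h \<Rightarrow> 'a \<Rightarrow> 'a" where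
  "actR scA \<Delta>A pr g a =
     sum_list (map (\<lambda>(a1, a2). scA (pr g a2) a1) (\<Delta>A a)) - scA (pr g a) 1"

definition actHH :: "(complex \<Rightarrow> 'a::ring_1 \<Rightarrow> 'a) \<Rightarrow> ('a \<Rightarrow> ('a \<times> 'a) list) \<Rightarrow> ('h \<Rightarrow> 'h)
    \<Rightarrow> ('h \<Rightarrow> 'a \<Rightarrow> complex) \<Rightarrow> 'h \<Rightarrow> 'h \<Rightarrow> 'a \<Rightarrow> 'a" where
  "actHH scA \<Delta>A SH pr h g a = actL scA \<Delta>A SH pr h (actR scA \<Delta>A pr g a)"

text \<open>Pull-back along theta: theta(h \<otimes> b) \<triangleright> a, with
  theta(h \<otimes> b) = h(1) R^-(2) \<otimes> h(2) R(1) \<langle>R^-(1) R(2), b\<rangle>.\<close>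
definition theta_act :: "(complex \<Rightarrow> 'a::ring_1 \<Rightarrow> 'a) \<Rightarrow> ('a \<Rightarrow> ('a \<times> 'a) list) \<Rightarrow>
    ('h::ring_1 \<Rightarrow> ('h \<times> 'h) list) \<Rightarrow> ('h \<Rightarrow> 'h) \<Rightarrow> ('h \<times> 'h) list \<Rightarrow> ('h \<times> 'h) list \<Rightarrow>
    ('h \<Rightarrow> 'a \<Rightarrow> complex) \<Rightarrow> 'h \<Rightarrow> 'a \<Rightarrow> 'a \<Rightarrow> 'a" where
  "theta_act scA \<Delta>A \<Delta>H SH R Rinv pr h b a =
     sum_list [scA (pr (s * q) b) (actHH scA \<Delta>A SH pr (h1 * t) (h2 * r) a).
               (h1, h2) \<leftarrow> \<Delta>H h, (s, t) \<leftarrow> Rinv, (r, q) \<leftarrow> R]"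

definition hact :: "(complex \<Rightarrow> 'a::ring_1 \<Rightarrow> 'a) \<Rightarrow> ('a \<Rightarrow> ('a \<times> 'a) list) \<Rightarrow> ('a \<Rightarrow> 'a)
    \<Rightarrow> ('h \<Rightarrow> 'a \<Rightarrow> complex) \<Rightarrow> 'h \<Rightarrow> 'a \<Rightarrow> 'a" where
  "hact scA \<Delta>A SA pr h a =
     sum_list (map (\<lambda>(a1, a2, a3). scA (pr h (SA a1 * a3)) a2) (delta3 \<Delta>A a))"

definition bact :: "(complex \<Rightarrow> 'h::ring_1 \<Rightarrow> 'h) \<Rightarrow> (complex \<Rightarrow> 'a::ring_1 \<Rightarrow> 'a) \<Rightarrow>
    ('a \<Rightarrow> ('a \<times> 'a) list) \<Rightarrow> ('h \<times> 'h) list \<Rightarrow> ('h \<Rightarrow> 'a \<Rightarrow> complex) \<Rightarrow> 'a \<Rightarrow> 'a \<Rightarrow> 'a" where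
  "bact scH scA \<Delta>A R pr b a =
     sum_list [scA (pr (r' * q) b * pr q' a1 * pr r a3) a2.
               (r', q') \<leftarrow> R, (r, q) \<leftarrow> R, (a1, a2, a3) \<leftarrow> delta3 \<Delta>A a]
     - scA (pr (Qmap scH R pr a) b) 1"

end

theory Submission
  imports Defs
begin

text \<open>Every identity is checked by pairing: since the pairing is nondegenerate, two
  elements of A (of H) are equal once every k \<in> H (every a \<in> A) pairs equally with them, and
  tensor identities in H \<otimes> H, H \<otimes> H \<otimes> H are applied through bilinear and trilinear forms.
  Pairing with k turns the H \<otimes> H action into
  \<langle>k, (h \<otimes> g) \<triangleright> a\<rangle> = \<langle>(Sh) k g, a\<rangle> - \<epsilon>(k) \<langle>(Sh) g, a\<rangle>,
  so the module axioms reduce to S being unital and antimultiplicative.  For the pull-back,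
  both \<langle>k, \<theta>(h \<otimes> b) \<triangleright> a\<rangle> and \<langle>k, h \<triangleright> (b \<triangleright> a)\<rangle> become sums of
  \<langle>R'(1) R(2), b\<rangle> \<langle>R'(2) (S h(1)) k h(2) R(1), a\<rangle> once (id \<otimes> S) R\<inverse> = R is known;
  the latter follows from (S \<otimes> id) R = R\<inverse> and (S \<otimes> S) R = R.\<close>

lemma additive_zero:
  fixes f :: "'v::ab_group_add \<Rightarrow> 'w::ab_group_add"
  assumes "\<And>x y. f (x + y) = f x + f y"
  shows "f 0 = 0"
  using assms[of 0 0] by simp

lemma additive_diff:
  fixes f :: "'v::ab_group_add \<Rightarrow> 'w::ab_group_add"
  assumes "\<And>x y. f (x + y) = f x + f y"
  shows "f (x - y) = f x - f y"
  using assms[of "x - y" y] by (simp add: algebra_simps)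

lemma additive_sum_list:
  fixes f :: "'v::ab_group_add \<Rightarrow> 'w::ab_group_add"
  assumes "\<And>x y. f (x + y) = f x + f y"
  shows "f (\<Sum>x\<leftarrow>xs. g x) = (\<Sum>x\<leftarrow>xs. f (g x))"
  by (induction xs) (simp_all add: assms additive_zero[of f, OF assms])

lemma sum_list_concat: "sum_list (concat xss) = (\<Sum>xs\<leftarrow>xss. sum_list xs)"
  by (induction xss) simp_all

lemma sum_list_map_concat: "(\<Sum>y\<leftarrow>concat (map g xs). f y) = (\<Sum>x\<leftarrow>xs. \<Sum>y\<leftarrow>g x. f y)"
  by (induction xs) simp_all

lemma sum_list_commute:
  fixes f :: "'a \<Rightarrow> 'b \<Rightarrow> 'c::comm_monoid_add"
  shows "(\<Sum>x\<leftarrow>xs. \<Sum>y\<leftarrow>ys. f x y) = (\<Sum>y\<leftarrow>ys. \<Sum>x\<leftarrow>xs. f x y)"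
  by (induction xs) (simp_all add: sum_list_addf)

lemma sum_list_pairs_commute:
  fixes f :: "'a \<Rightarrow> 'b \<Rightarrow> 'c \<Rightarrow> 'd \<Rightarrow> 'e::comm_monoid_add"
  shows "(\<Sum>(a,b)\<leftarrow>xs. \<Sum>(c,d)\<leftarrow>ys. f a b c d) = (\<Sum>(c,d)\<leftarrow>ys. \<Sum>(a,b)\<leftarrow>xs. f a b c d)"
  using sum_list_commute[of "\<lambda>p q. f (fst p) (snd p) (fst q) (snd q)" ys xs]
  by (simp add: split_def)

lemma sum_list_pairs_cong:
  "(\<And>a b. f a b = g a b) \<Longrightarrow> (\<Sum>(a,b)\<leftarrow>xs. f a b) = (\<Sum>(a,b)\<leftarrow>xs. g a b)"
  by simp

lemma sum_list_pairs_reverse3: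
  fixes f :: "'a \<Rightarrow> 'b \<Rightarrow> 'c \<Rightarrow> 'd \<Rightarrow> 'e \<Rightarrow> 'f \<Rightarrow> 'g::comm_monoid_add"
  shows "(\<Sum>(a,b)\<leftarrow>xs. \<Sum>(c,d)\<leftarrow>ys. \<Sum>(e,g)\<leftarrow>zs. f a b c d e g)
    = (\<Sum>(e,g)\<leftarrow>zs. \<Sum>(c,d)\<leftarrow>ys. \<Sum>(a,b)\<leftarrow>xs. f a b c d e g)"
proof -
  have "(\<Sum>(a,b)\<leftarrow>xs. \<Sum>(c,d)\<leftarrow>ys. \<Sum>(e,g)\<leftarrow>zs. f a b c d e g)
      = (\<Sum>(a,b)\<leftarrow>xs. \<Sum>(e,g)\<leftarrow>zs. \<Sum>(c,d)\<leftarrow>ys. f a b c d e g)"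
    by (rule sum_list_pairs_cong, rule sum_list_pairs_commute)
  also have "\<dots> = (\<Sum>(e,g)\<leftarrow>zs. \<Sum>(a,b)\<leftarrow>xs. \<Sum>(c,d)\<leftarrow>ys. f a b c d e g)"
    by (rule sum_list_pairs_commute)
  also have "\<dots> = (\<Sum>(e,g)\<leftarrow>zs. \<Sum>(c,d)\<leftarrow>ys. \<Sum>(a,b)\<leftarrow>xs. f a b c d e g)"
    by (rule sum_list_pairs_cong, rule sum_list_pairs_commute)
  finally show ?thesis .
qed

lemma bilinI:
  assumes "\<And>x x' y. f (x + x') y = f x y + f x' y" and "\<And>c x y. f (sc1 c x) y = c * f x y"
    and "\<And>x y y'. f x (y + y') = f x y + f x y'" and "\<And>c x y. f x (sc2 c y) = c * f x y"
  shows "bilin sc1 sc2 f"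
  using assms unfolding bilin_def clin_def by simp

lemma trilinI:
  assumes "\<And>x x' y w. f (x + x') y w = f x y w + f x' y w" and "\<And>c x y w. f (sc c x) y w = c * f x y w"
    and "\<And>x y y' w. f x (y + y') w = f x y w + f x y' w" and "\<And>c x y w. f x (sc c y) w = c * f x y w"
    and "\<And>x y w w'. f x y (w + w') = f x y w + f x y w'" and "\<And>c x y w. f x y (sc c w) = c * f x y w"
  shows "trilin sc f"
  using assms unfolding trilin_def clin_def by simp

lemma teq2_bilin_eq: "teq2 sc xs ys \<Longrightarrow> bilin sc sc f \<Longrightarrow> (\<Sum>(u,v)\<leftarrow>xs. f u v) = (\<Sum>(u,v)\<leftarrow>ys. f u v)"
  unfolding teq2_def by blast

lemma teq3_trilin_eq:
  "teq3 sc xs ys \<Longrightarrow> trilin sc f \<Longrightarrow> (\<Sum>(u,v,w)\<leftarrow>xs. f u v w) = (\<Sum>(u,v,w)\<leftarrow>ys. f u v w)"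
  unfolding teq3_def by blast

lemma sum_tmul2: "(\<Sum>(x,y)\<leftarrow>tmul2 xs ys. F x y) = (\<Sum>(a,b)\<leftarrow>xs. \<Sum>(c,d)\<leftarrow>ys. F (a * c) (b * d))"
  by (simp add: tmul2_def sum_list_map_concat split_def comp_def)

context
  fixes sc1 :: "complex \<Rightarrow> 'v::ab_group_add \<Rightarrow> 'v" and sc2 :: "complex \<Rightarrow> 'w::ab_group_add \<Rightarrow> 'w"
    and f :: "'v \<Rightarrow> 'w \<Rightarrow> complex"
  assumes f: "bilin sc1 sc2 f"
begin

lemma bilin_add_left: "f (x + y) z = f x z + f y z"
  using f unfolding bilin_def clin_def by simp
lemma bilin_add_right: "f z (x + y) = f z x + f z y"
  using f unfolding bilin_def clin_def by simp
lemma bilin_scale_left: "f (sc1 c x) z = c * f x z"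
  using f unfolding bilin_def clin_def by simp
lemma bilin_scale_right: "f z (sc2 c x) = c * f z x"
  using f unfolding bilin_def clin_def by simp
lemma bilin_sum_left: "f (\<Sum>x\<leftarrow>xs. g x) z = (\<Sum>x\<leftarrow>xs. f (g x) z)"
  by (rule additive_sum_list[of "\<lambda>x. f x z"]) (rule bilin_add_left)
lemma bilin_sum_right: "f z (\<Sum>x\<leftarrow>xs. g x) = (\<Sum>x\<leftarrow>xs. f z (g x))"
  by (rule additive_sum_list[of "f z"]) (rule bilin_add_right)

end

locale nondegenerate_hopf_pairing =
  fixes scH :: "complex \<Rightarrow> 'h::ring_1 \<Rightarrow> 'h" and \<Delta>H :: "'h \<Rightarrow> ('h \<times> 'h) list"
    and \<epsilon>H :: "'h \<Rightarrow> complex" and SH :: "'h \<Rightarrow> 'h"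
    and scA :: "complex \<Rightarrow> 'a::ring_1 \<Rightarrow> 'a" and \<Delta>A :: "'a \<Rightarrow> ('a \<times> 'a) list"
    and \<epsilon>A :: "'a \<Rightarrow> complex" and SA :: "'a \<Rightarrow> 'a"
    and pr :: "'h \<Rightarrow> 'a \<Rightarrow> complex"
  assumes H: "hopf scH \<Delta>H \<epsilon>H SH"
    and P: "hopf_pairing scH \<Delta>H \<epsilon>H SH scA \<Delta>A \<epsilon>A SA pr"
    and ND: "nondegenerate pr"
begin

lemma calgH: "calg scH"
  using H unfolding hopf_def by simp

lemma scH_add: "scH z (x + y) = scH z x + scH z y"
  using calgH unfolding calg_def cvs_def by simp
lemma scH_mult: "scH (z * w) x = scH z (scH w x)"
  using calgH unfolding calg_def cvs_def by simp
lemma scH_one: "scH 1 x = x"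
  using calgH unfolding calg_def cvs_def by simp
lemma scH_left: "scH z x * y = scH z (x * y)"
  using calgH unfolding calg_def by metis
lemma scH_right: "x * scH z y = scH z (x * y)"
  using calgH unfolding calg_def by metis

lemma pr_bilin: "bilin scH scA pr"
  using P unfolding hopf_pairing_def by simp
lemma pr_add_left: "pr (x + y) a = pr x a + pr y a"
  using pr_bilin unfolding bilin_def clin_def by simp
lemma pr_scale_left: "pr (scH z x) a = z * pr x a"
  using pr_bilin unfolding bilin_def clin_def by simp
lemma pr_add_right: "pr x (a + b) = pr x a + pr x b"
  using pr_bilin unfolding bilin_def clin_def by simp
lemma pr_scale_right: "pr x (scA z a) = z * pr x a"
  using pr_bilin unfolding bilin_def clin_def by simp

lemma pr_mult_left: "pr (h * g) a = (\<Sum>(a1,a2)\<leftarrow>\<Delta>A a. pr h a1 * pr g a2)"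
  using P unfolding hopf_pairing_def by simp
lemma pr_mult_right: "pr h (a * b) = (\<Sum>(h1,h2)\<leftarrow>\<Delta>H h. pr h1 a * pr h2 b)"
  using P unfolding hopf_pairing_def by simp
lemma pr_one_left: "pr 1 a = \<epsilon>A a"
  using P unfolding hopf_pairing_def by simp
lemma pr_one_right: "pr h 1 = \<epsilon>H h"
  using P unfolding hopf_pairing_def by simp
lemma pr_antipode: "pr (SH h) a = pr h (SA a)"
  using P unfolding hopf_pairing_def by simp

lemma SH_add: "SH (x + y) = SH x + SH y"
  using H unfolding hopf_def clin_def by simp
lemma SH_scale: "SH (scH z x) = scH z (SH x)"
  using H unfolding hopf_def clin_def by simp
lemma \<epsilon>H_add: "\<epsilon>H (x + y) = \<epsilon>H x + \<epsilon>H y"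
  using H unfolding hopf_def clin_def by simp
lemma \<epsilon>H_scale: "\<epsilon>H (scH z x) = z * \<epsilon>H x"
  using H unfolding hopf_def clin_def by simp
lemma \<epsilon>H_mult: "\<epsilon>H (x * y) = \<epsilon>H x * \<epsilon>H y"
  using H unfolding hopf_def by simp
lemma \<epsilon>H_one: "\<epsilon>H 1 = 1"
  using H unfolding hopf_def by simp
lemma counitH_left: "(\<Sum>(u,v)\<leftarrow>\<Delta>H x. scH (\<epsilon>H u) v) = x"
  using H unfolding hopf_def by simp
lemma counitH_right: "(\<Sum>(u,v)\<leftarrow>\<Delta>H x. scH (\<epsilon>H v) u) = x"
  using H unfolding hopf_def by simp
lemma antipodeH_left: "(\<Sum>(u,v)\<leftarrow>\<Delta>H x. SH u * v) = scH (\<epsilon>H x) 1"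
  using H unfolding hopf_def by simp
lemma antipodeH_right: "(\<Sum>(u,v)\<leftarrow>\<Delta>H x. u * SH v) = scH (\<epsilon>H x) 1"
  using H unfolding hopf_def by simp
lemma coproductH_mult: "teq2 scH (\<Delta>H (x * y)) (tmul2 (\<Delta>H x) (\<Delta>H y))"
  using H unfolding hopf_def by simp
lemma coproductH_one: "teq2 scH (\<Delta>H 1) [(1, 1)]"
  using H unfolding hopf_def by simp
lemma coproductH_coassoc: "teq3 scH [(u, v, w). (y, w) \<leftarrow> \<Delta>H x, (u, v) \<leftarrow> \<Delta>H y] (delta3 \<Delta>H x)"
  using H unfolding hopf_def by simp

lemmas pr_diff_left = additive_diff[of "\<lambda>x. pr x a" for a, OF pr_add_left]
lemmas pr_diff_right = additive_diff[of "pr x" for x, OF pr_add_right]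
lemmas pr_sum_left = additive_sum_list[of "\<lambda>x. pr x a" for a, OF pr_add_left]
lemmas pr_sum_right = additive_sum_list[of "pr x" for x, OF pr_add_right]
lemmas SH_sum = additive_sum_list[of SH, OF SH_add]
lemmas \<epsilon>H_sum = additive_sum_list[of \<epsilon>H, OF \<epsilon>H_add]
lemmas scH_sum = additive_sum_list[of "scH z" for z, OF scH_add]

lemma pairing_extA:
  assumes "\<And>k. pr k x = pr k y"
  shows "x = y"
proof -
  have "\<forall>k. pr k (x - y) = 0"
    using assms by (simp add: pr_diff_right)
  then show ?thesis
    using ND unfolding nondegenerate_def by auto
qed

lemma pairing_extH:
  assumes "\<And>a. pr x a = pr y a"
  shows "x = y"
proof -
  have "\<forall>a. pr (x - y) a = 0"
    using assms by (simp add: pr_diff_left)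
  then show ?thesis
    using ND unfolding nondegenerate_def by auto
qed

lemma teq2_bilinear_map_eq:
  assumes T: "teq2 scH xs ys"
    and "\<And>v. clin scH scH (\<lambda>u. B u v)" and "\<And>u. clin scH scH (\<lambda>v. B u v)"
  shows "(\<Sum>(u,v)\<leftarrow>xs. B u v) = (\<Sum>(u,v)\<leftarrow>ys. B u v)"
proof (rule pairing_extH)
  fix a
  have "bilin scH scH (\<lambda>u v. pr (B u v) a)"
    using assms(2,3) unfolding bilin_def clin_def by (simp add: pr_add_left pr_scale_left)
  then have "(\<Sum>(u,v)\<leftarrow>xs. pr (B u v) a) = (\<Sum>(u,v)\<leftarrow>ys. pr (B u v) a)"
    using T unfolding teq2_def by blast
  then show "pr (\<Sum>(u,v)\<leftarrow>xs. B u v) a = pr (\<Sum>(u,v)\<leftarrow>ys. B u v) a"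
    by (simp add: pr_sum_left split_def)
qed

lemma teq3_trilinear_map_eq:
  assumes T: "teq3 scH xs ys" and "\<And>v w. clin scH scH (\<lambda>u. B u v w)"
    and "\<And>u w. clin scH scH (\<lambda>v. B u v w)" and "\<And>u v. clin scH scH (\<lambda>w. B u v w)"
  shows "(\<Sum>(u,v,w)\<leftarrow>xs. B u v w) = (\<Sum>(u,v,w)\<leftarrow>ys. B u v w)"
proof (rule pairing_extH)
  fix a
  have "trilin scH (\<lambda>u v w. pr (B u v w) a)"
    using assms(2-4) unfolding trilin_def clin_def by (simp add: pr_add_left pr_scale_left)
  then have "(\<Sum>(u,v,w)\<leftarrow>xs. pr (B u v w) a) = (\<Sum>(u,v,w)\<leftarrow>ys. pr (B u v w) a)"
    using T unfolding teq3_def by blast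
  then show "pr (\<Sum>(u,v,w)\<leftarrow>xs. B u v w) a = pr (\<Sum>(u,v,w)\<leftarrow>ys. B u v w) a"
    by (simp add: pr_sum_left split_def)
qed

lemma coassoc_sum_eq:
  assumes "\<And>v w. clin scH scH (\<lambda>u. B u v w)"
    and "\<And>u w. clin scH scH (\<lambda>v. B u v w)" and "\<And>u v. clin scH scH (\<lambda>w. B u v w)"
  shows "(\<Sum>(y,w)\<leftarrow>\<Delta>H x. \<Sum>(u,v)\<leftarrow>\<Delta>H y. B u v w) = (\<Sum>(u,y)\<leftarrow>\<Delta>H x. \<Sum>(v,w)\<leftarrow>\<Delta>H y. B u v w)"
  using teq3_trilinear_map_eq[OF coproductH_coassoc assms]
  by (simp add: delta3_def sum_list_map_concat split_def comp_def)

lemma antipode_one: "SH 1 = 1"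
proof -
  have "(\<Sum>(u,v)\<leftarrow>\<Delta>H 1. SH u * v) = (\<Sum>(u,v)\<leftarrow>[(1,1)]. SH u * v)"
    by (rule teq2_bilinear_map_eq[OF coproductH_one])
      (simp_all add: clin_def SH_add SH_scale distrib_left distrib_right scH_left scH_right)
  then show ?thesis
    by (simp add: antipodeH_left \<epsilon>H_one scH_one)
qed

lemma antipode_mult_convolution:
  "(\<Sum>(p,q)\<leftarrow>\<Delta>H x. \<Sum>(p',q')\<leftarrow>\<Delta>H y. SH (p * p') * (q * q')) = scH (\<epsilon>H x * \<epsilon>H y) 1"
proof -
  have "(\<Sum>(p,q)\<leftarrow>\<Delta>H x. \<Sum>(p',q')\<leftarrow>\<Delta>H y. SH (p * p') * (q * q'))
      = (\<Sum>(u,v)\<leftarrow>tmul2 (\<Delta>H x) (\<Delta>H y). SH u * v)"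
    by (simp add: tmul2_def sum_list_map_concat split_def comp_def)
  also have "\<dots> = (\<Sum>(u,v)\<leftarrow>\<Delta>H (x * y). SH u * v)"
    by (rule teq2_bilinear_map_eq[OF coproductH_mult, symmetric])
      (simp_all add: clin_def SH_add SH_scale distrib_left distrib_right scH_left scH_right)
  finally show ?thesis
    by (simp add: antipodeH_left \<epsilon>H_mult)
qed

lemma sum_coproduct_antipode_cancel:
  assumes f_add: "\<And>u v. f (u + v) = f u + f v" and f_scale: "\<And>z u. f (scH z u) = scH z (f u)"
  shows "(\<Sum>(x1,x2)\<leftarrow>\<Delta>H x. \<Sum>(p,q)\<leftarrow>\<Delta>H x1. f p * q * SH x2) = f x"
proof -
  have "(\<Sum>(x1,x2)\<leftarrow>\<Delta>H x. \<Sum>(p,q)\<leftarrow>\<Delta>H x1. f p * q * SH x2)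
      = (\<Sum>(p,u)\<leftarrow>\<Delta>H x. \<Sum>(q,x2)\<leftarrow>\<Delta>H u. f p * (q * SH x2))"
    by (subst coassoc_sum_eq)
      (simp_all add: clin_def f_add f_scale SH_add SH_scale distrib_left distrib_right
        scH_left scH_right mult.assoc)
  also have "\<dots> = (\<Sum>(p,u)\<leftarrow>\<Delta>H x. scH (\<epsilon>H u) (f p))"
    by (simp add: split_def sum_list_const_mult antipodeH_right[unfolded split_def] scH_right)
  also have "\<dots> = f x"
    using arg_cong[OF counitH_right[of x], of f]
    by (simp add: additive_sum_list[of f, OF f_add] split_def f_scale)
  finally show ?thesis .
qed

lemma antipode_mult: "SH (x * y) = SH y * SH x"
proof -
  have convolution: "scH (\<epsilon>H x1 * \<epsilon>H y1) w
      = (\<Sum>(p,q)\<leftarrow>\<Delta>H x1. \<Sum>(p',q')\<leftarrow>\<Delta>H y1. SH (p * p') * q * q' * w)" for x1 y1 w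
    using arg_cong[OF antipode_mult_convolution, of "\<lambda>u. u * w"]
    by (simp add: sum_list_mult_const[symmetric] split_def scH_left mult.assoc)
  have cancel_y: "(\<Sum>(y1,y2)\<leftarrow>\<Delta>H y. \<Sum>(p',q')\<leftarrow>\<Delta>H y1. SH (p * p') * q * q' * SH y2 * w)
      = SH (p * y) * q * w" for p q w
    using arg_cong[OF sum_coproduct_antipode_cancel[of "\<lambda>p'. SH (p * p') * q"], of "\<lambda>u. u * w"]
    by (simp_all add: distrib_left distrib_right SH_add SH_scale scH_left scH_right mult.assoc
        split_def sum_list_mult_const[symmetric])
  have "SH y * SH x = (\<Sum>(x1,x2)\<leftarrow>\<Delta>H x. \<Sum>(y1,y2)\<leftarrow>\<Delta>H y.
      scH (\<epsilon>H x1 * \<epsilon>H y1) (SH y2 * SH x2))"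
    using arg_cong2[OF counitH_left[of y] counitH_left[of x], of "\<lambda>u v. SH u * SH v"]
    by (simp add: SH_sum SH_scale split_def sum_list_const_mult[symmetric]
        sum_list_mult_const[symmetric] scH_left scH_right scH_mult scH_sum)
  also have "\<dots> = (\<Sum>(x1,x2)\<leftarrow>\<Delta>H x. \<Sum>(y1,y2)\<leftarrow>\<Delta>H y. \<Sum>(p,q)\<leftarrow>\<Delta>H x1.
      \<Sum>(p',q')\<leftarrow>\<Delta>H y1. SH (p * p') * q * q' * SH y2 * SH x2)"
    by (simp only: convolution mult.assoc)
  also have "\<dots> = (\<Sum>(x1,x2)\<leftarrow>\<Delta>H x. \<Sum>(p,q)\<leftarrow>\<Delta>H x1. \<Sum>(y1,y2)\<leftarrow>\<Delta>H y.
      \<Sum>(p',q')\<leftarrow>\<Delta>H y1. SH (p * p') * q * q' * SH y2 * SH x2)"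
    by (rule sum_list_pairs_cong, rule sum_list_pairs_commute)
  also have "\<dots> = (\<Sum>(x1,x2)\<leftarrow>\<Delta>H x. \<Sum>(p,q)\<leftarrow>\<Delta>H x1. SH (p * y) * q * SH x2)"
    by (simp only: cancel_y)
  also have "\<dots> = SH (x * y)"
    by (rule sum_coproduct_antipode_cancel) (simp_all add: distrib_right SH_add SH_scale scH_left)
  finally show ?thesis ..
qed

lemma pr_actL: "pr k (actL scA \<Delta>A SH pr h a) = pr (SH h * k) a - pr (SH h) a * \<epsilon>H k"
  unfolding actL_def by (simp add: pr_diff_right pr_sum_right split_def pr_scale_right pr_one_right pr_mult_left)

lemma pr_actR: "pr k (actR scA \<Delta>A pr g a) = pr (k * g) a - pr g a * \<epsilon>H k"
  unfolding actR_def
  by (simp add: pr_diff_right pr_sum_right split_def pr_scale_right pr_one_right pr_mult_left mult.commute)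

lemma pr_actHH: "pr k (actHH scA \<Delta>A SH pr h g a) = pr (SH h * k * g) a - \<epsilon>H k * pr (SH h * g) a"
  unfolding actHH_def by (simp add: pr_actL pr_actR \<epsilon>H_mult algebra_simps)

lemma counit_actHH: "\<epsilon>A (actHH scA \<Delta>A SH pr h g a) = 0"
  by (simp add: pr_one_left[symmetric] pr_actHH \<epsilon>H_one)

lemma actHH_add_left_factor:
  "actHH scA \<Delta>A SH pr (h + h') g a = actHH scA \<Delta>A SH pr h g a + actHH scA \<Delta>A SH pr h' g a"
  by (rule pairing_extA) (simp add: pr_actHH pr_add_right SH_add pr_add_left algebra_simps)

lemma actHH_add_right_factor:
  "actHH scA \<Delta>A SH pr h (g + g') a = actHH scA \<Delta>A SH pr h g a + actHH scA \<Delta>A SH pr h g' a"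
  by (rule pairing_extA) (simp add: pr_actHH pr_add_right pr_add_left algebra_simps)

lemma actHH_scale_left_factor: "actHH scA \<Delta>A SH pr (scH z h) g a = scA z (actHH scA \<Delta>A SH pr h g a)"
  by (rule pairing_extA) (simp add: pr_actHH pr_scale_right SH_scale scH_left pr_scale_left algebra_simps)

lemma actHH_scale_right_factor: "actHH scA \<Delta>A SH pr h (scH z g) a = scA z (actHH scA \<Delta>A SH pr h g a)"
  by (rule pairing_extA) (simp add: pr_actHH pr_scale_right scH_left scH_right pr_scale_left algebra_simps)

lemma actHH_add: "actHH scA \<Delta>A SH pr h g (a + a') = actHH scA \<Delta>A SH pr h g a + actHH scA \<Delta>A SH pr h g a'"
  by (rule pairing_extA) (simp add: pr_actHH pr_add_right algebra_simps)

lemma actHH_scale: "actHH scA \<Delta>A SH pr h g (scA z a) = scA z (actHH scA \<Delta>A SH pr h g a)"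
  by (rule pairing_extA) (simp add: pr_actHH pr_scale_right algebra_simps)

lemma actHH_one: "\<epsilon>A a = 0 \<Longrightarrow> actHH scA \<Delta>A SH pr 1 1 a = a"
  by (rule pairing_extA) (simp add: pr_actHH antipode_one pr_one_left)

lemma actHH_mult:
  "actHH scA \<Delta>A SH pr (h * h') (g * g') a = actHH scA \<Delta>A SH pr h g (actHH scA \<Delta>A SH pr h' g' a)"
  by (rule pairing_extA) (simp add: pr_actHH antipode_mult \<epsilon>H_mult algebra_simps)

lemma pr_hact: "pr k (hact scA \<Delta>A SA pr h a) = (\<Sum>(h1,h2)\<leftarrow>\<Delta>H h. pr (SH h1 * k * h2) a)"
proof -
  have "pr k (hact scA \<Delta>A SA pr h a) = (\<Sum>(a1,a')\<leftarrow>\<Delta>A a. \<Sum>(a2,a3)\<leftarrow>\<Delta>A a'.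
      \<Sum>(h1,h2)\<leftarrow>\<Delta>H h. pr (SH h1) a1 * (pr k a2 * pr h2 a3))"
    unfolding hact_def delta3_def
    by (simp add: pr_sum_right sum_list_map_concat split_def comp_def pr_scale_right pr_mult_right
        pr_antipode sum_list_mult_const[symmetric] sum_list_const_mult[symmetric] mult_ac)
  also have "\<dots> = (\<Sum>(a1,a')\<leftarrow>\<Delta>A a. \<Sum>(h1,h2)\<leftarrow>\<Delta>H h. \<Sum>(a2,a3)\<leftarrow>\<Delta>A a'.
      pr (SH h1) a1 * (pr k a2 * pr h2 a3))"
    by (rule sum_list_pairs_cong, rule sum_list_pairs_commute)
  also have "\<dots> = (\<Sum>(h1,h2)\<leftarrow>\<Delta>H h. \<Sum>(a1,a')\<leftarrow>\<Delta>A a. \<Sum>(a2,a3)\<leftarrow>\<Delta>A a'.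
      pr (SH h1) a1 * (pr k a2 * pr h2 a3))"
    by (rule sum_list_pairs_commute)
  also have "\<dots> = (\<Sum>(h1,h2)\<leftarrow>\<Delta>H h. pr (SH h1 * k * h2) a)"
    by (simp add: mult.assoc pr_mult_left split_def sum_list_const_mult[symmetric])
  finally show ?thesis .
qed

lemma counit_adjoint_sum: "(\<Sum>(h1,h2)\<leftarrow>\<Delta>H h. \<epsilon>H (SH h1 * k * h2)) = \<epsilon>H k * \<epsilon>H h"
proof -
  have "(\<Sum>(h1,h2)\<leftarrow>\<Delta>H h. \<epsilon>H (SH h1 * k * h2)) = \<epsilon>H k * \<epsilon>H (\<Sum>(h1,h2)\<leftarrow>\<Delta>H h. SH h1 * h2)"
    by (simp add: \<epsilon>H_sum \<epsilon>H_mult split_def sum_list_const_mult[symmetric] mult_ac)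
  then show ?thesis
    by (simp add: antipodeH_left \<epsilon>H_scale \<epsilon>H_one)
qed

end

locale quasitriangular_pairing = nondegenerate_hopf_pairing +
  fixes R Rinv :: "('h::ring_1 \<times> 'h) list"
  assumes QT: "quasitriangular scH \<Delta>H R Rinv"
begin

lemma R_Rinv: "teq2 scH (tmul2 R Rinv) [(1, 1)]"
  using QT unfolding quasitriangular_def by simp
lemma Rinv_R: "teq2 scH (tmul2 Rinv R) [(1, 1)]"
  using QT unfolding quasitriangular_def by simp
lemma coproduct_R_left:
  "teq3 scH [(u, v, q). (r, q) \<leftarrow> R, (u, v) \<leftarrow> \<Delta>H r] [(r, r', q * q'). (r, q) \<leftarrow> R, (r', q') \<leftarrow> R]"
  using QT unfolding quasitriangular_def by simp
lemma coproduct_R_right: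
  "teq3 scH [(r, u, v). (r, q) \<leftarrow> R, (u, v) \<leftarrow> \<Delta>H q] [(r * r', q', q). (r, q) \<leftarrow> R, (r', q') \<leftarrow> R]"
  using QT unfolding quasitriangular_def by simp

text \<open>An identity X = Y in H \<otimes> H is stated by evaluating an arbitrary bilinear form g on
  both sides.\<close>

lemma R_Rinv_sum:
  "bilin scH scH g \<Longrightarrow> (\<Sum>(r,q)\<leftarrow>R. \<Sum>(s,t)\<leftarrow>Rinv. g (r * s) (q * t)) = g 1 1"
  using teq2_bilin_eq[OF R_Rinv] by (simp add: sum_tmul2)

lemma Rinv_R_sum:
  "bilin scH scH g \<Longrightarrow> (\<Sum>(s,t)\<leftarrow>Rinv. \<Sum>(r,q)\<leftarrow>R. g (s * r) (t * q)) = g 1 1"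
  using teq2_bilin_eq[OF Rinv_R] by (simp add: sum_tmul2)

lemma coproduct_R_left_sum:
  "trilin scH F \<Longrightarrow>
    (\<Sum>(r,q)\<leftarrow>R. \<Sum>(u,v)\<leftarrow>\<Delta>H r. F u v q) = (\<Sum>(r,q)\<leftarrow>R. \<Sum>(r',q')\<leftarrow>R. F r r' (q * q'))"
  using teq3_trilin_eq[OF coproduct_R_left] by (simp add: sum_list_map_concat split_def comp_def)

lemma coproduct_R_right_sum:
  "trilin scH F \<Longrightarrow>
    (\<Sum>(r,q)\<leftarrow>R. \<Sum>(u,v)\<leftarrow>\<Delta>H q. F r u v) = (\<Sum>(r,q)\<leftarrow>R. \<Sum>(r',q')\<leftarrow>R. F (r * r') q' q)"
  using teq3_trilin_eq[OF coproduct_R_right] by (simp add: sum_list_map_concat split_def comp_def)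

lemmas linearity_simps = distrib_left distrib_right SH_add SH_scale scH_left scH_right
  pr_add_left pr_scale_left \<epsilon>H_add \<epsilon>H_scale sum_list_addf split_def sum_list_const_mult
  mult.assoc mult.left_commute bilin_add_left bilin_add_right bilin_scale_left bilin_scale_right

lemma R_left_mult_invariant_imp_one:
  assumes "\<And>g. bilin scH scH g \<Longrightarrow> (\<Sum>(r,q)\<leftarrow>R. g r q) = (\<Sum>(r,q)\<leftarrow>R. g (r * c) q)"
  shows "c = 1"
proof (rule pairing_extH)
  fix a
  define g where "g x y = (\<Sum>(s,t)\<leftarrow>Rinv. pr (s * x) a * \<epsilon>H (t * y))" for x y
  have eval: "(\<Sum>(r,q)\<leftarrow>R. g (r * z) q) = pr z a" for z
  proof -
    have "(\<Sum>(r,q)\<leftarrow>R. g (r * z) q) = (\<Sum>(s,t)\<leftarrow>Rinv. \<Sum>(r,q)\<leftarrow>R. pr (s * r * z) a * \<epsilon>H (t * q))"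
      unfolding g_def by (simp add: mult.assoc, rule sum_list_pairs_commute)
    also have "\<dots> = pr (1 * z) a * \<epsilon>H 1"
      by (rule Rinv_R_sum[of "\<lambda>x y. pr (x * z) a * \<epsilon>H y"]) (rule bilinI; simp add: linearity_simps)
    finally show ?thesis by (simp add: \<epsilon>H_one)
  qed
  have "bilin scH scH g"
    unfolding g_def by (rule bilinI; simp add: linearity_simps)
  then show "pr c a = pr 1 a"
    using assms eval[of c] eval[of 1] by simp
qed

lemma R_right_mult_invariant_imp_one:
  assumes "\<And>g. bilin scH scH g \<Longrightarrow> (\<Sum>(r,q)\<leftarrow>R. g r q) = (\<Sum>(r,q)\<leftarrow>R. g r (c * q))"
  shows "c = 1"
proof (rule pairing_extH)
  fix a
  define g where "g x y = (\<Sum>(s,t)\<leftarrow>Rinv. \<epsilon>H (x * s) * pr (y * t) a)" for x y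
  have eval: "(\<Sum>(r,q)\<leftarrow>R. g r (z * q)) = pr z a" for z
  proof -
    have "(\<Sum>(r,q)\<leftarrow>R. g r (z * q)) = \<epsilon>H 1 * pr (z * 1) a"
      unfolding g_def
      by (simp only: mult.assoc, rule R_Rinv_sum[of "\<lambda>x y. \<epsilon>H x * pr (z * y) a"])
        (rule bilinI; simp add: linearity_simps)
    then show ?thesis by (simp add: \<epsilon>H_one)
  qed
  have "bilin scH scH g"
    unfolding g_def by (rule bilinI; simp add: linearity_simps)
  then show "pr c a = pr 1 a"
    using assms eval[of c] eval[of 1] by simp
qed

lemma R_counit_right: "(\<Sum>(r,q)\<leftarrow>R. scH (\<epsilon>H q) r) = 1"
proof (rule R_left_mult_invariant_imp_one)
  fix g assume g: "bilin scH scH g"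
  have "(\<Sum>(u,v)\<leftarrow>\<Delta>H q. g r (scH (\<epsilon>H u) v)) = g r q" for r q
    using bilin_sum_right[OF g, of r "\<lambda>(u,v). scH (\<epsilon>H u) v" "\<Delta>H q"]
    by (simp add: counitH_left[unfolded split_def] split_def)
  then have "(\<Sum>(r,q)\<leftarrow>R. g r q) = (\<Sum>(r,q)\<leftarrow>R. \<Sum>(u,v)\<leftarrow>\<Delta>H q. g r (scH (\<epsilon>H u) v))"
    by simp
  also have "\<dots> = (\<Sum>(r,q)\<leftarrow>R. \<Sum>(r',q')\<leftarrow>R. g (r * r') (scH (\<epsilon>H q') q))"
    by (rule coproduct_R_right_sum) (rule trilinI; use g in \<open>simp add: linearity_simps\<close>)
  also have "\<dots> = (\<Sum>(r,q)\<leftarrow>R. g (r * (\<Sum>(r',q')\<leftarrow>R. scH (\<epsilon>H q') r')) q)"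
    using g by (simp add: bilin_sum_left bilin_scale_left bilin_scale_right sum_list_const_mult[symmetric]
        split_def scH_right)
  finally show "(\<Sum>(r,q)\<leftarrow>R. g r q) = (\<Sum>(r,q)\<leftarrow>R. g (r * (\<Sum>(r',q')\<leftarrow>R. scH (\<epsilon>H q') r')) q)" .
qed

lemma R_counit_left: "(\<Sum>(r,q)\<leftarrow>R. scH (\<epsilon>H r) q) = 1"
proof (rule R_right_mult_invariant_imp_one)
  fix g assume g: "bilin scH scH g"
  have "(\<Sum>(u,v)\<leftarrow>\<Delta>H r. g (scH (\<epsilon>H u) v) q) = g r q" for r q
    using bilin_sum_left[OF g, of "\<lambda>(u,v). scH (\<epsilon>H u) v" "\<Delta>H r" q]
    by (simp add: counitH_left[unfolded split_def] split_def)
  then have "(\<Sum>(r,q)\<leftarrow>R. g r q) = (\<Sum>(r,q)\<leftarrow>R. \<Sum>(u,v)\<leftarrow>\<Delta>H r. g (scH (\<epsilon>H u) v) q)"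
    by simp
  also have "\<dots> = (\<Sum>(r,q)\<leftarrow>R. \<Sum>(r',q')\<leftarrow>R. g (scH (\<epsilon>H r) r') (q * q'))"
    by (rule coproduct_R_left_sum) (rule trilinI; use g in \<open>simp add: linearity_simps\<close>)
  also have "\<dots> = (\<Sum>(r',q')\<leftarrow>R. \<Sum>(r,q)\<leftarrow>R. g (scH (\<epsilon>H r) r') (q * q'))"
    by (rule sum_list_pairs_commute)
  also have "\<dots> = (\<Sum>(r',q')\<leftarrow>R. g r' ((\<Sum>(r,q)\<leftarrow>R. scH (\<epsilon>H r) q) * q'))"
    using g by (simp add: bilin_sum_right bilin_scale_left bilin_scale_right sum_list_mult_const[symmetric]
        split_def scH_left)
  finally show "(\<Sum>(r,q)\<leftarrow>R. g r q) = (\<Sum>(r,q)\<leftarrow>R. g r ((\<Sum>(r,q)\<leftarrow>R. scH (\<epsilon>H r) q) * q))" .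
qed

lemma antipode_left_R_R_sum:
  assumes g: "bilin scH scH g"
  shows "(\<Sum>(r,q)\<leftarrow>R. \<Sum>(r',q')\<leftarrow>R. g (SH r * r') (q * q')) = g 1 1"
proof -
  have "trilin scH (\<lambda>u v q. g (SH u * v) q)"
    by (rule trilinI; use g in \<open>simp add: linearity_simps\<close>)
  then have "(\<Sum>(r,q)\<leftarrow>R. \<Sum>(r',q')\<leftarrow>R. g (SH r * r') (q * q'))
      = (\<Sum>(r,q)\<leftarrow>R. \<Sum>(u,v)\<leftarrow>\<Delta>H r. g (SH u * v) q)"
    by (simp add: coproduct_R_left_sum)
  also have "\<dots> = (\<Sum>(r,q)\<leftarrow>R. g (scH (\<epsilon>H r) 1) q)"
  proof -
    have "(\<Sum>(u,v)\<leftarrow>\<Delta>H r. g (SH u * v) q) = g (scH (\<epsilon>H r) 1) q" for r q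
      using bilin_sum_left[OF g, of "\<lambda>(u,v). SH u * v" "\<Delta>H r" q]
      by (simp add: antipodeH_left[unfolded split_def] split_def)
    then show ?thesis by simp
  qed
  also have "\<dots> = g 1 1"
    using g bilin_sum_right[OF g, of 1 "\<lambda>(r,q). scH (\<epsilon>H r) q" R] R_counit_left
    by (simp add: split_def bilin_scale_left bilin_scale_right)
  finally show ?thesis .
qed

lemma R_R_antipode_right_sum:
  assumes g: "bilin scH scH g"
  shows "(\<Sum>(r,q)\<leftarrow>R. \<Sum>(r',q')\<leftarrow>R. g (r * r') (SH q' * q)) = g 1 1"
proof -
  have "trilin scH (\<lambda>r u v. g r (SH u * v))"
    by (rule trilinI; use g in \<open>simp add: linearity_simps\<close>)
  then have "(\<Sum>(r,q)\<leftarrow>R. \<Sum>(r',q')\<leftarrow>R. g (r * r') (SH q' * q))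
      = (\<Sum>(r,q)\<leftarrow>R. \<Sum>(u,v)\<leftarrow>\<Delta>H q. g r (SH u * v))"
    by (simp add: coproduct_R_right_sum)
  also have "\<dots> = (\<Sum>(r,q)\<leftarrow>R. g r (scH (\<epsilon>H q) 1))"
  proof -
    have "(\<Sum>(u,v)\<leftarrow>\<Delta>H q. g r (SH u * v)) = g r (scH (\<epsilon>H q) 1)" for r q
      using bilin_sum_right[OF g, of r "\<lambda>(u,v). SH u * v" "\<Delta>H q"]
      by (simp add: antipodeH_left[unfolded split_def] split_def)
    then show ?thesis by simp
  qed
  also have "\<dots> = g 1 1"
    using g bilin_sum_left[OF g, of "\<lambda>(r,q). scH (\<epsilon>H q) r" R 1] R_counit_right
    by (simp add: split_def bilin_scale_left bilin_scale_right)
  finally show ?thesis .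
qed

lemma antipode_left_R_eq_Rinv:
  assumes g: "bilin scH scH g"
  shows "(\<Sum>(r,q)\<leftarrow>R. g (SH r) q) = (\<Sum>(s,t)\<leftarrow>Rinv. g s t)"
proof -
  have "(\<Sum>(r,q)\<leftarrow>R. g (SH r) q)
      = (\<Sum>(r,q)\<leftarrow>R. \<Sum>(r',q')\<leftarrow>R. \<Sum>(s,t)\<leftarrow>Rinv. g (SH r * (r' * s)) (q * (q' * t)))"
  proof (rule sum_list_pairs_cong)
    fix r q
    have "bilin scH scH (\<lambda>x y. g (SH r * x) (q * y))"
      by (rule bilinI; use g in \<open>simp add: linearity_simps\<close>)
    from R_Rinv_sum[OF this]
    show "g (SH r) q = (\<Sum>(r',q')\<leftarrow>R. \<Sum>(s,t)\<leftarrow>Rinv. g (SH r * (r' * s)) (q * (q' * t)))"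
      by simp
  qed
  also have "\<dots> = (\<Sum>(r,q)\<leftarrow>R. \<Sum>(s,t)\<leftarrow>Rinv. \<Sum>(r',q')\<leftarrow>R. g (SH r * (r' * s)) (q * (q' * t)))"
    by (rule sum_list_pairs_cong, rule sum_list_pairs_commute)
  also have "\<dots> = (\<Sum>(s,t)\<leftarrow>Rinv. \<Sum>(r,q)\<leftarrow>R. \<Sum>(r',q')\<leftarrow>R. g (SH r * (r' * s)) (q * (q' * t)))"
    by (rule sum_list_pairs_commute)
  also have "\<dots> = (\<Sum>(s,t)\<leftarrow>Rinv. g s t)"
  proof (rule sum_list_pairs_cong)
    fix s t
    have "bilin scH scH (\<lambda>x y. g (x * s) (y * t))"
      by (rule bilinI; use g in \<open>simp add: linearity_simps\<close>)
    from antipode_left_R_R_sum[OF this]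
    show "(\<Sum>(r,q)\<leftarrow>R. \<Sum>(r',q')\<leftarrow>R. g (SH r * (r' * s)) (q * (q' * t))) = g s t"
      by (simp add: mult.assoc)
  qed
  finally show ?thesis .
qed

lemma antipode_antipode_R:
  assumes f: "bilin scH scH f"
  shows "(\<Sum>(r,q)\<leftarrow>R. f (SH r) (SH q)) = (\<Sum>(r,q)\<leftarrow>R. f r q)"
proof -
  have "(\<Sum>(a,b)\<leftarrow>R. f (SH a) (SH b))
      = (\<Sum>(a,b)\<leftarrow>R. \<Sum>(s,t)\<leftarrow>Rinv. \<Sum>(c,d)\<leftarrow>R. f (SH a * (s * c)) (SH b * (t * d)))"
  proof (rule sum_list_pairs_cong)
    fix a b
    have "bilin scH scH (\<lambda>x y. f (SH a * x) (SH b * y))"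
      by (rule bilinI; use f in \<open>simp add: linearity_simps\<close>)
    from Rinv_R_sum[OF this]
    show "f (SH a) (SH b) = (\<Sum>(s,t)\<leftarrow>Rinv. \<Sum>(c,d)\<leftarrow>R. f (SH a * (s * c)) (SH b * (t * d)))"
      by simp
  qed
  also have "\<dots> = (\<Sum>(a,b)\<leftarrow>R. \<Sum>(r,q)\<leftarrow>R. \<Sum>(c,d)\<leftarrow>R. f (SH a * (SH r * c)) (SH b * (q * d)))"
  proof (rule sum_list_pairs_cong)
    fix a b
    have "bilin scH scH (\<lambda>x y. \<Sum>(c,d)\<leftarrow>R. f (SH a * (x * c)) (SH b * (y * d)))"
      by (rule bilinI; use f in \<open>simp add: linearity_simps\<close>)
    from antipode_left_R_eq_Rinv[OF this]
    show "(\<Sum>(s,t)\<leftarrow>Rinv. \<Sum>(c,d)\<leftarrow>R. f (SH a * (s * c)) (SH b * (t * d)))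
        = (\<Sum>(r,q)\<leftarrow>R. \<Sum>(c,d)\<leftarrow>R. f (SH a * (SH r * c)) (SH b * (q * d)))"
      by (rule sym)
  qed
  also have "\<dots> = (\<Sum>(c,d)\<leftarrow>R. \<Sum>(r,q)\<leftarrow>R. \<Sum>(a,b)\<leftarrow>R. f (SH a * (SH r * c)) (SH b * (q * d)))"
    by (rule sum_list_pairs_reverse3)
  also have "\<dots> = (\<Sum>(c,d)\<leftarrow>R. f c d)"
  proof (rule sum_list_pairs_cong)
    fix c d
    have "bilin scH scH (\<lambda>x y. f (SH x * c) (y * d))"
      by (rule bilinI; use f in \<open>simp add: linearity_simps\<close>)
    from R_R_antipode_right_sum[OF this]
    have "(\<Sum>(r,q)\<leftarrow>R. \<Sum>(a,b)\<leftarrow>R. f (SH (r * a) * c) (SH b * q * d)) = f c d"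
      by (simp only: antipode_one mult_1_left)
    then show "(\<Sum>(r,q)\<leftarrow>R. \<Sum>(a,b)\<leftarrow>R. f (SH a * (SH r * c)) (SH b * (q * d))) = f c d"
      by (simp only: antipode_mult mult.assoc)
  qed
  finally show ?thesis .
qed

lemma antipode_right_Rinv_eq_R:
  assumes f: "bilin scH scH f"
  shows "(\<Sum>(s,t)\<leftarrow>Rinv. f s (SH t)) = (\<Sum>(r,q)\<leftarrow>R. f r q)"
proof -
  have "bilin scH scH (\<lambda>x y. f x (SH y))"
    by (rule bilinI; use f in \<open>simp add: linearity_simps\<close>)
  from antipode_left_R_eq_Rinv[OF this] show ?thesis
    using antipode_antipode_R[OF f] by simp
qed

definition R_pairing :: "'a \<Rightarrow> 'a \<Rightarrow> 'h \<Rightarrow> complex" where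
  "R_pairing b a X = (\<Sum>(r',q')\<leftarrow>R. \<Sum>(r,q)\<leftarrow>R. pr (r' * q) b * pr (q' * X * r) a)"

lemma R_pairing_add: "R_pairing b a (X + Y) = R_pairing b a X + R_pairing b a Y"
  unfolding R_pairing_def by (simp add: linearity_simps)

lemma R_pairing_scale: "R_pairing b a (scH z X) = z * R_pairing b a X"
  unfolding R_pairing_def by (simp add: linearity_simps)

lemmas R_pairing_sum = additive_sum_list[of "R_pairing b a" for b a, OF R_pairing_add]

lemma Rinv_pairing_eq_R_pairing:
  "(\<Sum>(s,t)\<leftarrow>Rinv. \<Sum>(r,q)\<leftarrow>R. pr (s * q) b * pr (SH t * X * r) a) = R_pairing b a X"
proof -
  have "bilin scH scH (\<lambda>x y. \<Sum>(r,q)\<leftarrow>R. pr (x * q) b * pr (y * X * r) a)"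
    by (rule bilinI; simp add: linearity_simps)
  from antipode_right_Rinv_eq_R[OF this] show ?thesis
    unfolding R_pairing_def by simp
qed

lemma pr_Qmap: "pr (Qmap scH R pr a) b = R_pairing b a 1"
  unfolding Qmap_def R_pairing_def
  by (simp add: sum_list_concat sum_list_map_concat pr_sum_left split_def comp_def pr_scale_left mult.commute)

lemma pr_bact: "pr k (bact scH scA \<Delta>A R pr b a) = R_pairing b a k - R_pairing b a 1 * \<epsilon>H k"
  unfolding bact_def delta3_def
  by (simp add: pr_Qmap[unfolded R_pairing_def] R_pairing_def sum_list_concat sum_list_map_concat
      pr_diff_right pr_sum_right split_def comp_def pr_scale_right pr_one_right pr_mult_left
      sum_list_const_mult[symmetric] mult_ac)

lemma pr_theta_act:
  "pr k (theta_act scA \<Delta>A \<Delta>H SH R Rinv pr h b a)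
    = (\<Sum>(h1,h2)\<leftarrow>\<Delta>H h. R_pairing b a (SH h1 * k * h2)) - \<epsilon>H k * \<epsilon>H h * R_pairing b a 1"
proof -
  have "pr k (theta_act scA \<Delta>A \<Delta>H SH R Rinv pr h b a)
      = (\<Sum>(h1,h2)\<leftarrow>\<Delta>H h. R_pairing b a (SH h1 * k * h2) - \<epsilon>H k * R_pairing b a (SH h1 * h2))"
    unfolding theta_act_def Rinv_pairing_eq_R_pairing[symmetric]
    by (simp add: sum_list_concat sum_list_map_concat pr_sum_right split_def comp_def pr_scale_right
        pr_actHH antipode_mult mult.assoc right_diff_distrib sum_list_subtractf sum_list_const_mult
        mult.left_commute)
  also have "\<dots> = (\<Sum>(h1,h2)\<leftarrow>\<Delta>H h. R_pairing b a (SH h1 * k * h2))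
      - \<epsilon>H k * R_pairing b a (\<Sum>(h1,h2)\<leftarrow>\<Delta>H h. SH h1 * h2)"
    by (simp add: sum_list_subtractf R_pairing_sum split_def sum_list_const_mult)
  finally show ?thesis
    by (simp add: antipodeH_left R_pairing_scale)
qed

lemma theta_act_eq_hact_bact:
  "theta_act scA \<Delta>A \<Delta>H SH R Rinv pr h b a = hact scA \<Delta>A SA pr h (bact scH scA \<Delta>A R pr b a)"
proof (rule pairing_extA)
  fix k
  have "pr k (hact scA \<Delta>A SA pr h (bact scH scA \<Delta>A R pr b a))
      = (\<Sum>(h1,h2)\<leftarrow>\<Delta>H h. R_pairing b a (SH h1 * k * h2))
        - R_pairing b a 1 * (\<Sum>(h1,h2)\<leftarrow>\<Delta>H h. \<epsilon>H (SH h1 * k * h2))"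
    by (simp add: pr_hact pr_bact sum_list_subtractf split_def sum_list_const_mult)
  then show "pr k (theta_act scA \<Delta>A \<Delta>H SH R Rinv pr h b a)
      = pr k (hact scA \<Delta>A SA pr h (bact scH scA \<Delta>A R pr b a))"
    unfolding pr_theta_act counit_adjoint_sum by (simp add: mult_ac)
qed

end

theorem proposition4p2:
  fixes scH :: "complex \<Rightarrow> 'h::ring_1 \<Rightarrow> 'h" and \<Delta>H :: "'h \<Rightarrow> ('h \<times> 'h) list"
    and \<epsilon>H :: "'h \<Rightarrow> complex" and SH :: "'h \<Rightarrow> 'h"
    and scA :: "complex \<Rightarrow> 'a::ring_1 \<Rightarrow> 'a" and \<Delta>A :: "'a \<Rightarrow> ('a \<times> 'a) list"
    and \<epsilon>A :: "'a \<Rightarrow> complex" and SA :: "'a \<Rightarrow> 'a"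
    and pr :: "'h \<Rightarrow> 'a \<Rightarrow> complex"
    and R Rinv :: "('h \<times> 'h) list"
  assumes H: "hopf scH \<Delta>H \<epsilon>H SH"
    and A: "hopf scA \<Delta>A \<epsilon>A SA"
    and P: "hopf_pairing scH \<Delta>H \<epsilon>H SH scA \<Delta>A \<epsilon>A SA pr"
    and ND: "nondegenerate pr"
    and QT: "quasitriangular scH \<Delta>H R Rinv"
    and FACT: "bij (Qmap scH R pr)"
  shows
    \<comment> \<open>the formulas define an action of the algebra H \<otimes> H on ker \<epsilon>\<close>
    "(\<forall>h g a. \<epsilon>A a = 0 \<longrightarrow> \<epsilon>A (actHH scA \<Delta>A SH pr h g a) = 0) \<and>
     (\<forall>h h' g a. \<epsilon>A a = 0 \<longrightarrow>
        actHH scA \<Delta>A SH pr (h + h') g a = actHH scA \<Delta>A SH pr h g a + actHH scA \<Delta>A SH pr h' g a) \<and>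
     (\<forall>h g g' a. \<epsilon>A a = 0 \<longrightarrow>
        actHH scA \<Delta>A SH pr h (g + g') a = actHH scA \<Delta>A SH pr h g a + actHH scA \<Delta>A SH pr h g' a) \<and>
     (\<forall>z h g a. \<epsilon>A a = 0 \<longrightarrow>
        actHH scA \<Delta>A SH pr (scH z h) g a = scA z (actHH scA \<Delta>A SH pr h g a) \<and>
        actHH scA \<Delta>A SH pr h (scH z g) a = scA z (actHH scA \<Delta>A SH pr h g a)) \<and>
     (\<forall>h g a a'. \<epsilon>A a = 0 \<longrightarrow> \<epsilon>A a' = 0 \<longrightarrow>
        actHH scA \<Delta>A SH pr h g (a + a') = actHH scA \<Delta>A SH pr h g a + actHH scA \<Delta>A SH pr h g a') \<and>
     (\<forall>z h g a. \<epsilon>A a = 0 \<longrightarrow>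
        actHH scA \<Delta>A SH pr h g (scA z a) = scA z (actHH scA \<Delta>A SH pr h g a)) \<and>
     (\<forall>a. \<epsilon>A a = 0 \<longrightarrow> actHH scA \<Delta>A SH pr 1 1 a = a) \<and>
     (\<forall>h h' g g' a. \<epsilon>A a = 0 \<longrightarrow>
        actHH scA \<Delta>A SH pr (h * h') (g * g') a =
        actHH scA \<Delta>A SH pr h g (actHH scA \<Delta>A SH pr h' g' a)) \<and>
     \<comment> \<open>its pull-back along theta is the stated action of the double\<close>
     (\<forall>h b a. \<epsilon>A a = 0 \<longrightarrow>
        theta_act scA \<Delta>A \<Delta>H SH R Rinv pr h b a =
        hact scA \<Delta>A SA pr h (bact scH scA \<Delta>A R pr b a))"
proof -
  interpret quasitriangular_pairing scH \<Delta>H \<epsilon>H SH scA \<Delta>A \<epsilon>A SA pr R Rinv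
    by unfold_locales (fact H P ND QT)+
  show ?thesis
    by (simp add: counit_actHH actHH_add_left_factor actHH_add_right_factor actHH_scale_left_factor
        actHH_scale_right_factor actHH_add actHH_scale actHH_one actHH_mult theta_act_eq_hact_bact)
qed

end
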